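(* Let $0<a,b<1$, $P_1=T_1$, $P_2>0$. Consider the scheme where user 1 sends only a private Gaussian message of power $P_1$ and user 2 sends a public Gaussian message of power $P_2-\hat P_2$ and a private Gaussian message of power $\hat P_2$, with $\hat P_2\in[0,P_2]$; user 2's public message is decoded first at both receivers treating all other signals as noise, at the largest rate decodable at both receivers, and then the private messages are decoded treating the remaining interference as noise. Then for every $\hat P_2\in[0,P_2]$ the rate of user 2's public message is limited by receiver 1, and the sum-rate equals $\tfrac12\log_2(T_1+aP_2+1)$, independent of $\hat P_2$. Symmetrically, if $P_2=T_2$ the analogous scheme with roles of the users exchanged gives sum-rate $\tfrac12\log_2(T_2+bP_1+1)$ independent of the split of user 1's power.
   Context: Weak GIC $Y_1=X_1+\sqrt aX_2+Z_1$, $Y_2=\sqrt bX_1+X_2+Z_2$ with $Z_i\sim N(0,1)$ independent of inputs; $T_1=\frac{1-a}{ab}$, $T_2=\frac{1-b}{ab}$. *)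

theory Defs
  imports Complex_Main
begin

text \<open>Weak Gaussian interference channel
  Y1 = X1 + sqrt a X2 + Z1, Y2 = sqrt b X1 + X2 + Z2, unit noise variances.\<close>

definition T1 :: "real \<Rightarrow> real \<Rightarrow> real" where "T1 a b = (1 - a) / (a * b)"
definition T2 :: "real \<Rightarrow> real \<Rightarrow> real" where "T2 a b = (1 - b) / (a * b)"

definition Cg :: "real \<Rightarrow> real" where "Cg x = 1/2 * log 2 (1 + x)"

text \<open>Scheme A: user 1 sends only a private message of power P1; user 2 sends a public
  message of power P2 - Q and a private message of power Q.\<close>

definition pubA_rx1 :: "real \<Rightarrow> real \<Rightarrow> real \<Rightarrow> real \<Rightarrow> real \<Rightarrow> real" where
  "pubA_rx1 a b P1 P2 Q = Cg (a * (P2 - Q) / (P1 + a * Q + 1))"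
definition pubA_rx2 :: "real \<Rightarrow> real \<Rightarrow> real \<Rightarrow> real \<Rightarrow> real \<Rightarrow> real" where
  "pubA_rx2 a b P1 P2 Q = Cg ((P2 - Q) / (b * P1 + Q + 1))"
definition pubA_rate :: "real \<Rightarrow> real \<Rightarrow> real \<Rightarrow> real \<Rightarrow> real \<Rightarrow> real" where
  "pubA_rate a b P1 P2 Q = min (pubA_rx1 a b P1 P2 Q) (pubA_rx2 a b P1 P2 Q)"
definition privA_1 :: "real \<Rightarrow> real \<Rightarrow> real \<Rightarrow> real \<Rightarrow> real \<Rightarrow> real" where
  "privA_1 a b P1 P2 Q = Cg (P1 / (a * Q + 1))"
definition privA_2 :: "real \<Rightarrow> real \<Rightarrow> real \<Rightarrow> real \<Rightarrow> real \<Rightarrow> real" where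
  "privA_2 a b P1 P2 Q = Cg (Q / (b * P1 + 1))"
definition sumA :: "real \<Rightarrow> real \<Rightarrow> real \<Rightarrow> real \<Rightarrow> real \<Rightarrow> real" where
  "sumA a b P1 P2 Q = pubA_rate a b P1 P2 Q + privA_1 a b P1 P2 Q + privA_2 a b P1 P2 Q"

text \<open>Scheme B (roles exchanged): user 2 sends only a private message of power P2; user 1
  sends a public message of power P1 - Q and a private message of power Q.\<close>

definition pubB_rx1 :: "real \<Rightarrow> real \<Rightarrow> real \<Rightarrow> real \<Rightarrow> real \<Rightarrow> real" where
  "pubB_rx1 a b P1 P2 Q = Cg ((P1 - Q) / (a * P2 + Q + 1))"
definition pubB_rx2 :: "real \<Rightarrow> real \<Rightarrow> real \<Rightarrow> real \<Rightarrow> real \<Rightarrow> real" where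
  "pubB_rx2 a b P1 P2 Q = Cg (b * (P1 - Q) / (P2 + b * Q + 1))"
definition pubB_rate :: "real \<Rightarrow> real \<Rightarrow> real \<Rightarrow> real \<Rightarrow> real \<Rightarrow> real" where
  "pubB_rate a b P1 P2 Q = min (pubB_rx1 a b P1 P2 Q) (pubB_rx2 a b P1 P2 Q)"
definition privB_1 :: "real \<Rightarrow> real \<Rightarrow> real \<Rightarrow> real \<Rightarrow> real \<Rightarrow> real" where
  "privB_1 a b P1 P2 Q = Cg (Q / (a * P2 + 1))"
definition privB_2 :: "real \<Rightarrow> real \<Rightarrow> real \<Rightarrow> real \<Rightarrow> real \<Rightarrow> real" where
  "privB_2 a b P1 P2 Q = Cg (P2 / (b * Q + 1))"
definition sumB :: "real \<Rightarrow> real \<Rightarrow> real \<Rightarrow> real \<Rightarrow> real \<Rightarrow> real" where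
  "sumB a b P1 P2 Q = pubB_rate a b P1 P2 Q + privB_1 a b P1 P2 Q + privB_2 a b P1 P2 Q"

end

theory Submission
  imports Defs
begin

text \<open>Receiver 1 is the bottleneck for user 2's public message as soon as
  \<open>a b P1 + a \<le> P1 + 1\<close>, which \<open>P1 = T1\<close> (i.e. \<open>a b P1 = 1 - a\<close>) satisfies.
  The sum-rate then telescopes by the chain rule \<open>C(x) + C(y) = C((1+x)(1+y) - 1)\<close>:
  the first two terms give \<open>(P1 + a P2 + 1)/(a Q + 1)\<close>, and the choice \<open>P1 = T1\<close>
  makes the SNR-factor of user 2's private message exactly \<open>a Q + 1\<close>, because
  \<open>(a Q + 1)(b P1 + 1) = b P1 + Q + 1\<close> when \<open>a b P1 = 1 - a\<close>.\<close>

lemma Cg_mono: "0 \<le> x \<Longrightarrow> x \<le> y \<Longrightarrow> Cg x \<le> Cg y"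
  unfolding Cg_def by simp

lemma Cg_add:
  assumes "-1 < x" "-1 < y"
  shows "Cg x + Cg y = Cg ((1 + x) * (1 + y) - 1)"
proof -
  have "1 + ((1 + x) * (1 + y) - 1) = (1 + x) * (1 + y)"
    by simp
  then show ?thesis
    using assms unfolding Cg_def by (simp add: log_mult)
qed

lemma pubA_rate_eq_rx1:
  assumes "0 \<le> a" "0 \<le> b" "0 \<le> P1" "0 \<le> Q" "Q \<le> P2"
    and bottleneck: "a * b * P1 + a \<le> P1 + 1"
  shows "pubA_rate a b P1 P2 Q = pubA_rx1 a b P1 P2 Q"
proof -
  have d1: "0 < P1 + a * Q + 1" and d2: "0 < b * P1 + Q + 1"
    using assms by (auto intro: add_nonneg_pos)
  have "a * (b * P1 + Q + 1) \<le> P1 + a * Q + 1"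
    using bottleneck by (simp add: algebra_simps)
  then have "(P2 - Q) * (a * (b * P1 + Q + 1)) \<le> (P2 - Q) * (P1 + a * Q + 1)"
    using assms by (intro mult_left_mono) auto
  then have "a * (P2 - Q) / (P1 + a * Q + 1) \<le> (P2 - Q) / (b * P1 + Q + 1)"
    using d1 d2 by (simp add: divide_simps algebra_simps)
  moreover have "0 \<le> a * (P2 - Q) / (P1 + a * Q + 1)"
    using assms d1 by simp
  ultimately show ?thesis
    unfolding pubA_rate_def pubA_rx1_def pubA_rx2_def by (simp add: Cg_mono min_absorb1)
qed

lemma sumA_at_T1:
  assumes "0 < a" "0 < b" "0 \<le> P1" "0 \<le> Q" "Q \<le> P2"
    and P1: "a * b * P1 = 1 - a"
  shows "sumA a b P1 P2 Q = 1/2 * log 2 (P1 + a * P2 + 1)"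
proof -
  have aQ: "0 < a * Q + 1" and bP: "0 < b * P1 + 1" and d1: "0 < P1 + a * Q + 1"
    using assms by (auto intro: add_nonneg_pos)
  have "(a * Q + 1) * (b * P1 + 1) = (a * b * P1) * Q + a * Q + b * P1 + 1"
    by (simp add: algebra_simps)
  also have "\<dots> = b * P1 + Q + 1"
    by (subst P1) (simp add: algebra_simps)
  finally have snr2: "1 + Q / (b * P1 + 1) = a * Q + 1"
    using bP by (simp add: field_simps)
  have snr_pub: "1 + a * (P2 - Q) / (P1 + a * Q + 1) = (P1 + a * P2 + 1) / (P1 + a * Q + 1)"
    using d1 by (simp add: field_simps)
  have snr1: "1 + P1 / (a * Q + 1) = (P1 + a * Q + 1) / (a * Q + 1)"
    using aQ by (simp add: field_simps)
  have "0 \<le> a * (P2 - Q) / (P1 + a * Q + 1)" "0 \<le> P1 / (a * Q + 1)" "0 \<le> Q / (b * P1 + 1)"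
    using assms aQ bP d1 by auto
  moreover have "pubA_rate a b P1 P2 Q = pubA_rx1 a b P1 P2 Q"
    using assms by (intro pubA_rate_eq_rx1) auto
  ultimately have "sumA a b P1 P2 Q
      = Cg ((1 + a * (P2 - Q) / (P1 + a * Q + 1)) * (1 + P1 / (a * Q + 1))
              * (1 + Q / (b * P1 + 1)) - 1)"
    unfolding sumA_def privA_1_def privA_2_def pubA_rx1_def by (simp add: Cg_add)
  also have "\<dots> = Cg (P1 + a * P2)"
    unfolding snr_pub snr1 snr2 using aQ d1 by simp
  finally show ?thesis
    unfolding Cg_def by (simp add: add.commute)
qed

lemma schemeB_is_swapped_schemeA:
  "pubB_rx2 a b P1 P2 Q = pubA_rx1 b a P2 P1 Q"
  "pubB_rate a b P1 P2 Q = pubA_rate b a P2 P1 Q"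
  "sumB a b P1 P2 Q = sumA b a P2 P1 Q"
  unfolding pubB_rx1_def pubB_rx2_def pubA_rx1_def pubA_rx2_def pubB_rate_def pubA_rate_def
    sumB_def sumA_def privA_1_def privA_2_def privB_1_def privB_2_def
  by (simp_all add: min.commute)

theorem mainTheorem9:
  fixes a b :: real
  assumes "0 < a" "a < 1" "0 < b" "b < 1"
  shows "(\<forall>P1 P2 Q. P1 = T1 a b \<and> 0 < P2 \<and> 0 \<le> Q \<and> Q \<le> P2 \<longrightarrow>
            pubA_rate a b P1 P2 Q = pubA_rx1 a b P1 P2 Q \<and>
            sumA a b P1 P2 Q = 1/2 * log 2 (T1 a b + a * P2 + 1))
       \<and> (\<forall>P1 P2 Q. P2 = T2 a b \<and> 0 < P1 \<and> 0 \<le> Q \<and> Q \<le> P1 \<longrightarrow>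
            pubB_rate a b P1 P2 Q = pubB_rx2 a b P1 P2 Q \<and>
            sumB a b P1 P2 Q = 1/2 * log 2 (T2 a b + b * P1 + 1))"
proof (rule conjI; intro allI impI)
  fix P1 P2 Q :: real
  assume H: "P1 = T1 a b \<and> 0 < P2 \<and> 0 \<le> Q \<and> Q \<le> P2"
  then have "a * b * P1 = 1 - a" "0 \<le> P1"
    using assms by (simp_all add: T1_def)
  with H assms show "pubA_rate a b P1 P2 Q = pubA_rx1 a b P1 P2 Q \<and>
      sumA a b P1 P2 Q = 1/2 * log 2 (T1 a b + a * P2 + 1)"
    using pubA_rate_eq_rx1[of a b P1 Q P2] sumA_at_T1[of a b P1 Q P2] by simp
next
  fix P1 P2 Q :: real
  assume H: "P2 = T2 a b \<and> 0 < P1 \<and> 0 \<le> Q \<and> Q \<le> P1"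
  then have "b * a * P2 = 1 - b" "0 \<le> P2"
    using assms by (simp_all add: T2_def)
  with H assms show "pubB_rate a b P1 P2 Q = pubB_rx2 a b P1 P2 Q \<and>
      sumB a b P1 P2 Q = 1/2 * log 2 (T2 a b + b * P1 + 1)"
    using pubA_rate_eq_rx1[of b a P2 Q P1] sumA_at_T1[of b a P2 Q P1]
    unfolding schemeB_is_swapped_schemeA by simp
qed

end
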